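(* Let $G=(V,E)$ be a weighted undirected graph with $|V|=N$, let $\epsilon\in(0,1)$, $\alpha>0$, and let $S_\epsilon,S\subset V$ be nonempty proper subsets with $\mathrm{vol}(S,G)>0$ such that: (1) $|S_\epsilon|<\epsilon N$ and $\mathrm{vol}(S_\epsilon,G)<\epsilon\,\mathrm{vol}(V,G)$; (2) $\bar d(S_\epsilon,G)<\frac{1-\epsilon}{2(1+\alpha)}\bar d(S,G)$; (3) $\phi(S,G)<\frac{\alpha(1-\epsilon)}{1+\alpha}$. Let $\delta=\frac{\alpha(1-\epsilon)}{1+\alpha}-\phi(S,G)$. If $\tau>0$ satisfies $\alpha\,\bar d(S_\epsilon,G)\le\tau\le\delta\,\bar d(S,G)$, and both $\mathrm{vol}(S_\epsilon,G_\tau)\le\mathrm{vol}(V\setminus S_\epsilon,G_\tau)$ and $\mathrm{vol}(S,G_\tau)\le\mathrm{vol}(V\setminus S,G_\tau)$, then $\mathrm{CoreCut}_\tau(S)<\mathrm{CoreCut}_\tau(S_\epsilon)$.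
   Context: $w_{ij}\ge 0$ are the symmetric edge weights, $d_i=\sum_j w_{ij}$, $\mathrm{vol}(S,G)=\sum_{i\in S}d_i$, $\mathrm{cut}(S,G)=\sum_{i\in S,\,j\in V\setminus S}w_{ij}$, $\phi(S,G)=\mathrm{cut}(S,G)/\mathrm{vol}(S,G)$, and $\bar d(S,G)=\mathrm{vol}(S,G)/|S|$. $G_\tau$ is the graph with adjacency matrix entries $w_{ij}+\tau/N$ for all $i,j$, so $\mathrm{vol}(S,G_\tau)=\mathrm{vol}(S,G)+\tau|S|$. For nonempty proper $S$ with $\mathrm{vol}(S,G_\tau)\le\mathrm{vol}(V\setminus S,G_\tau)$, $\mathrm{CoreCut}_\tau(S)=\dfrac{\mathrm{cut}(S,G)+\frac{\tau}{N}|S||V\setminus S|}{\mathrm{vol}(S,G)+\tau|S|}$. *)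

theory Defs
  imports "HOL-Analysis.Analysis"
begin

definition weighted_graph :: "'a set \<Rightarrow> ('a \<Rightarrow> 'a \<Rightarrow> real) \<Rightarrow> bool" where
  "weighted_graph V w \<longleftrightarrow> finite V \<and> V \<noteq> {} \<and>
     (\<forall>i\<in>V. \<forall>j\<in>V. w i j \<ge> 0 \<and> w i j = w j i)"

definition deg :: "'a set \<Rightarrow> ('a \<Rightarrow> 'a \<Rightarrow> real) \<Rightarrow> 'a \<Rightarrow> real" where
  "deg V w i = (\<Sum>j\<in>V. w i j)"

definition vol :: "'a set \<Rightarrow> ('a \<Rightarrow> 'a \<Rightarrow> real) \<Rightarrow> 'a set \<Rightarrow> real" where
  "vol V w S = (\<Sum>i\<in>S. deg V w i)"

definition cut :: "'a set \<Rightarrow> ('a \<Rightarrow> 'a \<Rightarrow> real) \<Rightarrow> 'a set \<Rightarrow> real" where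
  "cut V w S = (\<Sum>i\<in>S. \<Sum>j\<in>V - S. w i j)"

definition conductance :: "'a set \<Rightarrow> ('a \<Rightarrow> 'a \<Rightarrow> real) \<Rightarrow> 'a set \<Rightarrow> real" where
  "conductance V w S = cut V w S / vol V w S"

definition avg_deg :: "'a set \<Rightarrow> ('a \<Rightarrow> 'a \<Rightarrow> real) \<Rightarrow> 'a set \<Rightarrow> real" where
  "avg_deg V w S = vol V w S / real (card S)"

definition reg_graph :: "'a set \<Rightarrow> ('a \<Rightarrow> 'a \<Rightarrow> real) \<Rightarrow> real \<Rightarrow> 'a \<Rightarrow> 'a \<Rightarrow> real" where
  "reg_graph V w \<tau> i j = w i j + \<tau> / real (card V)"

definition core_cut :: "'a set \<Rightarrow> ('a \<Rightarrow> 'a \<Rightarrow> real) \<Rightarrow> real \<Rightarrow> 'a set \<Rightarrow> real" where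
  "core_cut V w \<tau> S =
     (cut V w S + \<tau> / real (card V) * real (card S) * real (card (V - S)))
     / (vol V w S + \<tau> * real (card S))"

end

theory Submission
  imports Defs
begin

text \<open>The number \<open>\<alpha>(1 - \<epsilon>)/(1 + \<alpha>)\<close> separates the two core cuts. For \<open>S\<close>, the
  regularisation adds at most \<open>\<tau>|S|\<close> to the cut, and the upper bound on \<open>\<tau>\<close> is exactly what
  keeps the ratio below the threshold. For \<open>S\<^sub>\<epsilon>\<close>, the added cut
  \<open>\<tau>|S\<^sub>\<epsilon>|(N - |S\<^sub>\<epsilon>|)/N\<close> already exceeds \<open>(1 - \<epsilon>)\<tau>|S\<^sub>\<epsilon>|\<close> because \<open>S\<^sub>\<epsilon>\<close> is small,
  while the lower bound on \<open>\<tau>\<close> makes \<open>\<tau>|S\<^sub>\<epsilon>|\<close> dominate \<open>\<alpha> vol(S\<^sub>\<epsilon>)\<close>.\<close>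

lemma cut_nonneg:
  assumes "weighted_graph V w" "S \<subseteq> V"
  shows "cut V w S \<ge> 0"
  using assms unfolding weighted_graph_def cut_def by (intro sum_nonneg) auto

lemma vol_nonneg:
  assumes "weighted_graph V w" "S \<subseteq> V"
  shows "vol V w S \<ge> 0"
  using assms unfolding weighted_graph_def vol_def deg_def by (intro sum_nonneg) auto

lemma card_Diff_subset_real:
  assumes "finite V" "S \<subseteq> V"
  shows "real (card (V - S)) = real (card V) - real (card S)"
  using assms by (simp add: card_Diff_subset card_mono finite_subset of_nat_diff)

lemma core_cut_le_of_tau_le:
  assumes G: "weighted_graph V w" and S: "S \<subseteq> V" "S \<noteq> {}" and volS: "vol V w S > 0"
    and tau: "0 \<le> \<tau>" "\<tau> \<le> (a - conductance V w S) * avg_deg V w S"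
  shows "core_cut V w \<tau> S \<le> a"
proof -
  define N where "N = real (card V)"
  define s where "s = real (card S)"
  have finV: "finite V" using G unfolding weighted_graph_def by simp
  have s0: "s > 0" using S finV unfolding s_def by (simp add: card_gt_0_iff finite_subset)
  have sN: "s \<le> N" using S finV unfolding s_def N_def by (simp add: card_mono)
  have cut_eq: "cut V w S = conductance V w S * vol V w S"
    unfolding conductance_def using volS by simp
  have tau_s: "\<tau> * s \<le> a * vol V w S - cut V w S"
  proof -
    have "\<tau> * s \<le> (a - conductance V w S) * avg_deg V w S * s"
      using tau(2) s0 by (simp add: mult_right_mono)
    also have "\<dots> = a * vol V w S - cut V w S"
      unfolding avg_deg_def cut_eq s_def[symmetric] using s0 by (simp add: field_simps)
    finally show ?thesis .
  qed
  have "a * vol V w S \<ge> 0"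
    using tau_s tau(1) s0 cut_nonneg[OF G S(1)] by (smt (verit) mult_nonneg_nonneg)
  then have a0: "a \<ge> 0" using volS by (simp add: zero_le_mult_iff)
  have reg_le: "\<tau> / N * s * (N - s) \<le> \<tau> * s"
  proof (cases "N = 0")
    case False
    then have "(N - s) / N \<le> 1" using sN s0 by simp
    then have "\<tau> * s * ((N - s) / N) \<le> \<tau> * s * 1"
      using tau(1) s0 by (intro mult_left_mono) auto
    then show ?thesis by simp
  qed (use tau(1) s0 in simp)
  have "cut V w S + \<tau> / N * s * (N - s) \<le> a * vol V w S"
    using tau_s reg_le by linarith
  also have "\<dots> \<le> a * (vol V w S + \<tau> * s)"
    using a0 tau(1) s0 by (simp add: distrib_left)
  finally have "cut V w S + \<tau> / N * s * (N - s) \<le> a * (vol V w S + \<tau> * s)" .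
  moreover have "vol V w S + \<tau> * s > 0" using volS tau(1) s0 by (simp add: add_pos_nonneg)
  ultimately show ?thesis
    unfolding core_cut_def card_Diff_subset_real[OF finV S(1)] N_def[symmetric] s_def[symmetric]
    by (simp add: divide_le_eq)
qed

lemma less_core_cut_of_small_card:
  assumes G: "weighted_graph V w" and T: "T \<subseteq> V" "T \<noteq> {}"
    and eps: "\<epsilon> \<le> 1" and alpha: "\<alpha> > 0"
    and small: "real (card T) < \<epsilon> * real (card V)"
    and tau: "\<tau> > 0" "\<alpha> * avg_deg V w T \<le> \<tau>"
  shows "\<alpha> * (1 - \<epsilon>) / (1 + \<alpha>) < core_cut V w \<tau> T"
proof -
  define N where "N = real (card V)"
  define t where "t = real (card T)"
  define a where "a = \<alpha> * (1 - \<epsilon>) / (1 + \<alpha>)"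
  have finV: "finite V" using G unfolding weighted_graph_def by simp
  have t0: "t > 0" using T finV unfolding t_def by (simp add: card_gt_0_iff finite_subset)
  have N0: "N > 0" using T finV unfolding N_def by (auto simp: card_gt_0_iff)
  have vol_le: "\<alpha> * vol V w T \<le> \<tau> * t"
  proof -
    have "\<alpha> * avg_deg V w T * t \<le> \<tau> * t" using tau(2) t0 by (simp add: mult_right_mono)
    then show ?thesis unfolding avg_deg_def t_def[symmetric] using t0 by (simp add: field_simps)
  qed
  have "a * (vol V w T + \<tau> * t) = (1 - \<epsilon>) / (1 + \<alpha>) * (\<alpha> * vol V w T + \<alpha> * (\<tau> * t))"
    unfolding a_def by (simp add: field_simps)
  also have "\<dots> \<le> (1 - \<epsilon>) / (1 + \<alpha>) * (\<tau> * t + \<alpha> * (\<tau> * t))"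
    using vol_le eps alpha by (intro mult_left_mono) auto
  also have "\<dots> = (1 - \<epsilon>) * \<tau> * t" using alpha by (simp add: field_simps)
  also have "\<dots> < \<tau> / N * t * (N - t)"
  proof -
    have "1 - \<epsilon> < (N - t) / N"
      using small N0 unfolding t_def[symmetric] N_def[symmetric] by (simp add: field_simps)
    then have "\<tau> * t * (1 - \<epsilon>) < \<tau> * t * ((N - t) / N)"
      using tau(1) t0 by (intro mult_strict_left_mono) auto
    then show ?thesis by (simp add: field_simps)
  qed
  also have "\<dots> \<le> cut V w T + \<tau> / N * t * (N - t)" using cut_nonneg[OF G T(1)] by simp
  finally have "a * (vol V w T + \<tau> * t) < cut V w T + \<tau> / N * t * (N - t)" .
  moreover have "vol V w T + \<tau> * t > 0"
    using vol_nonneg[OF G T(1)] tau(1) t0 by (simp add: add_nonneg_pos)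
  ultimately show ?thesis
    unfolding a_def[symmetric] core_cut_def card_Diff_subset_real[OF finV T(1)]
      N_def[symmetric] t_def[symmetric]
    by (simp add: less_divide_eq)
qed

theorem corollary4p7:
  fixes V :: "'a set" and w :: "'a \<Rightarrow> 'a \<Rightarrow> real"
    and \<epsilon> \<alpha> \<tau> :: real and S\<epsilon> S :: "'a set"
  assumes G: "weighted_graph V w"
    and eps: "0 < \<epsilon>" "\<epsilon> < 1"
    and alpha: "\<alpha> > 0"
    and Seps: "S\<epsilon> \<subseteq> V" "S\<epsilon> \<noteq> {}" "S\<epsilon> \<noteq> V"
    and SS: "S \<subseteq> V" "S \<noteq> {}" "S \<noteq> V"
    and volS: "vol V w S > 0"
    and c1: "real (card S\<epsilon>) < \<epsilon> * real (card V)"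
            "vol V w S\<epsilon> < \<epsilon> * vol V w V"
    and c2: "avg_deg V w S\<epsilon> < (1 - \<epsilon>) / (2 * (1 + \<alpha>)) * avg_deg V w S"
    and c3: "conductance V w S < \<alpha> * (1 - \<epsilon>) / (1 + \<alpha>)"
    and tau: "\<tau> > 0"
      "\<alpha> * avg_deg V w S\<epsilon> \<le> \<tau>"
      "\<tau> \<le> (\<alpha> * (1 - \<epsilon>) / (1 + \<alpha>) - conductance V w S) * avg_deg V w S"
    and bal: "vol V (reg_graph V w \<tau>) S\<epsilon> \<le> vol V (reg_graph V w \<tau>) (V - S\<epsilon>)"
             "vol V (reg_graph V w \<tau>) S \<le> vol V (reg_graph V w \<tau>) (V - S)"
  shows "core_cut V w \<tau> S < core_cut V w \<tau> S\<epsilon>"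
proof -
  have "core_cut V w \<tau> S \<le> \<alpha> * (1 - \<epsilon>) / (1 + \<alpha>)"
    using core_cut_le_of_tau_le[OF G SS(1,2) volS] tau(1,3) by simp
  also have "\<dots> < core_cut V w \<tau> S\<epsilon>"
    using less_core_cut_of_small_card[OF G Seps(1,2) _ alpha c1(1) tau(1,2)] eps(2) by simp
  finally show ?thesis .
qed

end
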